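(* For all natural numbers $n\geq 1$ and all $m\geq 2$, \[a_m(n)=a_{m-1}(2n,n).\]
   Context: For $m\geq 1$, $a_m(n)$ is the number of partitions of $n$ in which the smallest part occurs at least $m$ times, and $a_m(N,k)$ is the number of partitions of $N$ in which the smallest part occurs at least $m$ times and the largest part minus the smallest part equals $k$. *)

theory Defs
  imports Main "HOL-Library.Multiset"
begin

definition partitions :: "nat \<Rightarrow> nat multiset set" where
  "partitions n = {p. (\<forall>x\<in>#p. 0 < x) \<and> sum_mset p = n}"

definition smallest_part :: "nat multiset \<Rightarrow> nat" where
  "smallest_part p = Min (set_mset p)"

definition largest_part :: "nat multiset \<Rightarrow> nat" where
  "largest_part p = Max (set_mset p)"

definition a_m :: "nat \<Rightarrow> nat \<Rightarrow> nat" where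
  "a_m m n = card {p \<in> partitions n. p \<noteq> {#} \<and> count p (smallest_part p) \<ge> m}"

definition a_mk :: "nat \<Rightarrow> nat \<Rightarrow> nat \<Rightarrow> nat" where
  "a_mk m N k = card {p \<in> partitions N. p \<noteq> {#} \<and> count p (smallest_part p) \<ge> m
                        \<and> largest_part p - smallest_part p = k}"

end

theory Submission
  imports Defs
begin

text \<open>Replacing one copy of the smallest part s of a partition of n by the part n + s gives a
  partition of 2n whose largest and smallest parts differ by exactly n; the smallest part stays s
  as long as it occurred at least twice, and then loses one occurrence. Conversely, replacing the
  largest part n + s of such a partition of 2n by s recovers the original partition.\<close>

lemma member_le_sum_mset: "(x::nat) \<in># p \<Longrightarrow> x \<le> sum_mset p"
  by (metis le_add1 sum_mset.remove)

lemma smallest_part_in: "p \<noteq> {#} \<Longrightarrow> smallest_part p \<in># p"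
  by (simp add: smallest_part_def)

lemma smallest_part_le: "x \<in># p \<Longrightarrow> smallest_part p \<le> x"
  by (simp add: smallest_part_def)

lemma smallest_part_eqI: "s \<in># p \<Longrightarrow> (\<And>x. x \<in># p \<Longrightarrow> s \<le> x) \<Longrightarrow> smallest_part p = s"
  unfolding smallest_part_def by (rule Min_eqI) auto

lemma largest_part_in: "p \<noteq> {#} \<Longrightarrow> largest_part p \<in># p"
  by (simp add: largest_part_def)

lemma largest_part_eqI: "l \<in># p \<Longrightarrow> (\<And>x. x \<in># p \<Longrightarrow> x \<le> l) \<Longrightarrow> largest_part p = l"
  unfolding largest_part_def by (rule Max_eqI) auto

definition raise_smallest :: "nat \<Rightarrow> nat multiset \<Rightarrow> nat multiset" where
  "raise_smallest n p = p - {#smallest_part p#} + {#n + smallest_part p#}"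

definition lower_largest :: "nat multiset \<Rightarrow> nat multiset" where
  "lower_largest p = p - {#largest_part p#} + {#smallest_part p#}"

lemma raise_smallest_nonempty: "raise_smallest n p \<noteq> {#}"
  by (simp add: raise_smallest_def)

lemma lower_largest_nonempty: "lower_largest p \<noteq> {#}"
  by (simp add: lower_largest_def)

lemma raise_smallest_in_partitions:
  assumes "p \<in> partitions n" "p \<noteq> {#}"
  shows "raise_smallest n p \<in> partitions (2 * n)"
proof -
  let ?s = "smallest_part p"
  have s_in: "?s \<in># p" using assms(2) by (rule smallest_part_in)
  have pos: "\<forall>x\<in>#p. 0 < x" and sum: "sum_mset p = n"
    using assms(1) by (auto simp: partitions_def)
  have "?s \<le> n" using member_le_sum_mset[OF s_in] sum by simp
  then have "sum_mset (raise_smallest n p) = 2 * n"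
    using sum_mset.remove[OF s_in] sum by (simp add: raise_smallest_def)
  moreover have "\<forall>x\<in>#raise_smallest n p. 0 < x"
    using pos s_in by (auto simp: raise_smallest_def dest: in_diffD)
  ultimately show ?thesis by (simp add: partitions_def)
qed

lemma smallest_part_raise_smallest:
  assumes "count p (smallest_part p) \<ge> 2"
  shows "smallest_part (raise_smallest n p) = smallest_part p"
proof (rule smallest_part_eqI)
  show "smallest_part p \<in># raise_smallest n p"
    using assms by (simp add: raise_smallest_def in_diff_count)
qed (auto simp: raise_smallest_def smallest_part_le dest: in_diffD)

lemma largest_part_raise_smallest:
  assumes "sum_mset p = n" "p \<noteq> {#}"
  shows "largest_part (raise_smallest n p) = n + smallest_part p"
proof (rule largest_part_eqI)
  let ?s = "smallest_part p"
  have "sum_mset (p - {#?s#}) = n - ?s"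
    using sum_mset.remove[OF smallest_part_in[OF assms(2)]] assms(1) by simp
  then have "x \<le> n + ?s" if "x \<in># p - {#?s#}" for x
    using member_le_sum_mset[OF that] by simp
  then show "x \<le> n + ?s" if "x \<in># raise_smallest n p" for x
    using that by (auto simp: raise_smallest_def)
qed (simp add: raise_smallest_def)

lemma count_smallest_part_raise_smallest:
  assumes "n \<ge> 1"
  shows "count (raise_smallest n p) (smallest_part p) = count p (smallest_part p) - 1"
  using assms by (simp add: raise_smallest_def)

lemma lower_largest_raise_smallest:
  assumes "sum_mset p = n" "p \<noteq> {#}" "count p (smallest_part p) \<ge> 2"
  shows "lower_largest (raise_smallest n p) = p"
  using smallest_part_in[OF assms(2)]
  by (simp add: lower_largest_def largest_part_raise_smallest[OF assms(1,2)]
      smallest_part_raise_smallest[OF assms(3)]) (simp add: raise_smallest_def)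

lemma smallest_part_lower_largest:
  assumes "p \<noteq> {#}"
  shows "smallest_part (lower_largest p) = smallest_part p"
  by (rule smallest_part_eqI)
    (auto simp: lower_largest_def smallest_part_le dest: in_diffD)

lemma lower_largest_in_partitions:
  assumes "p \<in> partitions N" "p \<noteq> {#}" "largest_part p - smallest_part p = k"
  shows "lower_largest p \<in> partitions (N - k)"
proof -
  let ?s = "smallest_part p" and ?l = "largest_part p"
  have s_in: "?s \<in># p" and l_in: "?l \<in># p"
    using assms(2) by (rule smallest_part_in, rule largest_part_in)
  have pos: "\<forall>x\<in>#p. 0 < x" and sum: "sum_mset p = N"
    using assms(1) by (auto simp: partitions_def)
  have "?s \<le> ?l" "?l \<le> N" using smallest_part_le[OF l_in] member_le_sum_mset[OF l_in] sum
    by simp_all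
  then have "sum_mset (lower_largest p) = N - k"
    using sum_mset.remove[OF l_in] sum assms(3) by (simp add: lower_largest_def)
  moreover have "\<forall>x\<in>#lower_largest p. 0 < x"
    using pos s_in by (auto simp: lower_largest_def dest: in_diffD)
  ultimately show ?thesis by (simp add: partitions_def)
qed

lemma count_smallest_part_lower_largest:
  assumes "largest_part p \<noteq> smallest_part p"
  shows "count (lower_largest p) (smallest_part p) = count p (smallest_part p) + 1"
  using assms by (simp add: lower_largest_def)

lemma raise_smallest_lower_largest:
  assumes "p \<noteq> {#}" "largest_part p - smallest_part p = n"
  shows "raise_smallest n (lower_largest p) = p"
proof -
  have "largest_part p = n + smallest_part p"
    using assms(2) smallest_part_le[OF largest_part_in[OF assms(1)]] by simp
  then show ?thesis
    using largest_part_in[OF assms(1)]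
    by (simp add: raise_smallest_def smallest_part_lower_largest[OF assms(1)])
      (simp add: lower_largest_def)
qed

lemma bij_betw_raise_smallest:
  assumes "n \<ge> 1" and "m \<ge> 2"
  shows "bij_betw (raise_smallest n)
    {p \<in> partitions n. p \<noteq> {#} \<and> count p (smallest_part p) \<ge> m}
    {p \<in> partitions (2 * n). p \<noteq> {#} \<and> count p (smallest_part p) \<ge> m - 1
      \<and> largest_part p - smallest_part p = n}"
    (is "bij_betw _ ?A ?B")
proof (rule bij_betw_byWitness[where f' = lower_largest])
  show "\<forall>p\<in>?A. lower_largest (raise_smallest n p) = p"
    using assms(2) by (auto simp: partitions_def intro: lower_largest_raise_smallest)
  show "\<forall>p\<in>?B. raise_smallest n (lower_largest p) = p"
    by (auto intro: raise_smallest_lower_largest)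
  show "raise_smallest n ` ?A \<subseteq> ?B"
  proof (rule image_subsetI)
    fix p assume "p \<in> ?A"
    then have p: "p \<in> partitions n" "p \<noteq> {#}" "count p (smallest_part p) \<ge> m" by simp_all
    have "sum_mset p = n" using p(1) by (simp add: partitions_def)
    then show "raise_smallest n p \<in> ?B"
      using assms p
      by (simp add: raise_smallest_in_partitions raise_smallest_nonempty
          smallest_part_raise_smallest count_smallest_part_raise_smallest
          largest_part_raise_smallest)
  qed
  show "lower_largest ` ?B \<subseteq> ?A"
    using assms lower_largest_in_partitions[where N = "2 * n" and k = n]
    by (auto simp: lower_largest_nonempty smallest_part_lower_largest
        count_smallest_part_lower_largest)
qed

theorem proposition1p6:
  fixes n m :: nat
  assumes "n \<ge> 1" and "m \<ge> 2"
  shows "a_m m n = a_mk (m - 1) (2 * n) n"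
  unfolding a_m_def a_mk_def using bij_betw_raise_smallest[OF assms] by (rule bij_betw_same_card)

end
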